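(* Let $(V,L,\varphi,E)$ be a valuation system. Then $\varphi$ is extendible if and only if $\varphi$ is $\Pi_{\aleph_1}$-extendible. Moreover, if $\varphi$ is extendible, then $\overline\varphi=\Pi_{\aleph_1}\varphi$.
   Context: $\aleph_1$ denotes the smallest uncountable ordinal. A valuation system $(V,L,\varphi,E)$ consists of: (i) a lattice $V$ which is $\sigma$-distributive (for every $a\in V$ and sequence $(b_n)$ with existing infimum, $\bigwedge_n(a\vee b_n)$ exists and equals $a\vee\bigwedge_n b_n$, and dually for suprema); (ii) a sublattice $L$ of $V$; (iii) a partially ordered abelian group $E$ which is R-complete (whenever $x_1\ge x_2\ge\cdots$ and $y_1\ge y_2\ge\cdots$ in $E$ are such that $\bigwedge_n(x_n+y_n)$ exists, $\bigwedge_n x_n$ and $\bigwedge_n y_n$ exist; dually for increasing sequences); (iv) a valuation $\varphi:L\to E$ (order-preserving, $\varphi(a\wedge b)+\varphi(a\vee b)=\varphi(a)+\varphi(b)$). A decreasing (resp. increasing) sequence $(a_n)$ in $L$ is $\varphi$-convergent if $\bigwedge_n a_n$ exists in $V$ and $\bigwedge_n\varphi(a_n)$ exists in $E$ (resp. with suprema). $\Pi L:=\{\bigwedge_n a_n:(a_n)\ \varphi\text{-convergent decreasing}\}$ and $\varphi$ is $\Pi$-extendible if there is a valuation $\Pi\varphi:\Pi L\to E$ with $\Pi\varphi(\bigwedge_n a_n)=\bigwedge_n\varphi(a_n)$ for all such sequences; $\Sigma L,\Sigma$-extendible, $\Sigma\varphi$ dually. Hierarchy (transfinite recursion): $\Pi_0\varphi=\Sigma_0\varphi=\varphi$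 on $L$; $\varphi$ is $\Pi_{\alpha+1}$-extendible iff it is $\Sigma_\alpha$-extendible and $\Sigma_\alpha\varphi$ is $\Pi$-extendible, with $\Pi_{\alpha+1}\varphi=\Pi(\Sigma_\alpha\varphi)$ on $\Pi(\Sigma_\alpha L)$; $\varphi$ is $\Sigma_{\alpha+1}$-extendible iff it is $\Pi_\alpha$-extendible and $\Pi_\alpha\varphi$ is $\Sigma$-extendible, with $\Sigma_{\alpha+1}\varphi=\Sigma(\Pi_\alpha\varphi)$; at a limit $\lambda$, $\varphi$ is $\Pi_\lambda$-extendible iff $\Pi_\alpha$-extendible for all $\alpha<\lambda$, and then $\Pi_\lambda\varphi$ is the common extension of the $\Pi_\alpha\varphi$ ($\alpha<\lambda$) on $\bigcup_{\alpha<\lambda}\Pi_\alpha L$; similarly $\Sigma_\lambda$. The hierarchy has collapsed at $Q$, where $Q=\Pi_\alpha\varphi$ or $Q=\Sigma_\alpha\varphi$, if $\varphi$ is $\Pi_{\alpha+1}$- and $\Sigma_{\alpha+1}$-extendible and $\Pi(Q)=Q=\Sigma(Q)$. $\varphi$ is extendible if the hierarchy has collapsed at some $Q$; this $Q$ is then unique and denoted $\overline\varphi$. *)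

theory Defs
  imports Main "HOL-Library.Countable_Set"
begin

definition inf_of :: "(nat \<Rightarrow> 'a::order) \<Rightarrow> 'a \<Rightarrow> bool" where
  "inf_of a x \<longleftrightarrow> (\<forall>n. x \<le> a n) \<and> (\<forall>y. (\<forall>n. y \<le> a n) \<longrightarrow> y \<le> x)"

definition sup_of :: "(nat \<Rightarrow> 'a::order) \<Rightarrow> 'a \<Rightarrow> bool" where
  "sup_of a x \<longleftrightarrow> (\<forall>n. a n \<le> x) \<and> (\<forall>y. (\<forall>n. a n \<le> y) \<longrightarrow> x \<le> y)"

definition sigma_distributive :: "'v::lattice itself \<Rightarrow> bool" where
  "sigma_distributive _ \<longleftrightarrow>
     (\<forall>(a::'v) b x. inf_of b x \<longrightarrow> inf_of (\<lambda>n. sup a (b n)) (sup a x)) \<and>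
     (\<forall>(a::'v) b x. sup_of b x \<longrightarrow> sup_of (\<lambda>n. inf a (b n)) (inf a x))"

definition sublattice :: "'v::lattice set \<Rightarrow> bool" where
  "sublattice L \<longleftrightarrow> (\<forall>a\<in>L. \<forall>b\<in>L. inf a b \<in> L \<and> sup a b \<in> L)"

definition R_complete :: "'e::ordered_ab_group_add itself \<Rightarrow> bool" where
  "R_complete _ \<longleftrightarrow>
     (\<forall>(x::nat \<Rightarrow> 'e) y. (\<forall>n. x (Suc n) \<le> x n) \<and> (\<forall>n. y (Suc n) \<le> y n) \<and>
        (\<exists>s. inf_of (\<lambda>n. x n + y n) s) \<longrightarrow> (\<exists>s. inf_of x s) \<and> (\<exists>s. inf_of y s)) \<and>
     (\<forall>(x::nat \<Rightarrow> 'e) y. (\<forall>n. x n \<le> x (Suc n)) \<and> (\<forall>n. y n \<le> y (Suc n)) \<and>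
        (\<exists>s. sup_of (\<lambda>n. x n + y n) s) \<longrightarrow> (\<exists>s. sup_of x s) \<and> (\<exists>s. sup_of y s))"

definition valuation_on :: "'v::lattice set \<Rightarrow> ('v \<Rightarrow> 'e::ordered_ab_group_add) \<Rightarrow> bool" where
  "valuation_on D f \<longleftrightarrow> sublattice D \<and>
     (\<forall>a\<in>D. \<forall>b\<in>D. a \<le> b \<longrightarrow> f a \<le> f b) \<and>
     (\<forall>a\<in>D. \<forall>b\<in>D. f (inf a b) + f (sup a b) = f a + f b)"

definition conv_dec :: "'v::lattice set \<Rightarrow> ('v \<Rightarrow> 'e::ordered_ab_group_add) \<Rightarrow> (nat \<Rightarrow> 'v) \<Rightarrow> bool" where
  "conv_dec D f a \<longleftrightarrow> (\<forall>n. a n \<in> D \<and> a (Suc n) \<le> a n) \<and>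
     (\<exists>x. inf_of a x) \<and> (\<exists>e. inf_of (\<lambda>n. f (a n)) e)"

definition conv_inc :: "'v::lattice set \<Rightarrow> ('v \<Rightarrow> 'e::ordered_ab_group_add) \<Rightarrow> (nat \<Rightarrow> 'v) \<Rightarrow> bool" where
  "conv_inc D f a \<longleftrightarrow> (\<forall>n. a n \<in> D \<and> a n \<le> a (Suc n)) \<and>
     (\<exists>x. sup_of a x) \<and> (\<exists>e. sup_of (\<lambda>n. f (a n)) e)"

definition PiDom :: "'v::lattice set \<Rightarrow> ('v \<Rightarrow> 'e::ordered_ab_group_add) \<Rightarrow> 'v set" where
  "PiDom D f = {x. \<exists>a. conv_dec D f a \<and> inf_of a x}"

definition SigDom :: "'v::lattice set \<Rightarrow> ('v \<Rightarrow> 'e::ordered_ab_group_add) \<Rightarrow> 'v set" where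
  "SigDom D f = {x. \<exists>a. conv_inc D f a \<and> sup_of a x}"

definition Pi_ext_prop :: "'v::lattice set \<Rightarrow> ('v \<Rightarrow> 'e::ordered_ab_group_add) \<Rightarrow> ('v \<Rightarrow> 'e) \<Rightarrow> bool" where
  "Pi_ext_prop D f g \<longleftrightarrow> valuation_on (PiDom D f) g \<and>
     (\<forall>a x e. conv_dec D f a \<longrightarrow> inf_of a x \<longrightarrow> inf_of (\<lambda>n. f (a n)) e \<longrightarrow> g x = e)"

definition Sig_ext_prop :: "'v::lattice set \<Rightarrow> ('v \<Rightarrow> 'e::ordered_ab_group_add) \<Rightarrow> ('v \<Rightarrow> 'e) \<Rightarrow> bool" where
  "Sig_ext_prop D f g \<longleftrightarrow> valuation_on (SigDom D f) g \<and>
     (\<forall>a x e. conv_inc D f a \<longrightarrow> sup_of a x \<longrightarrow> sup_of (\<lambda>n. f (a n)) e \<longrightarrow> g x = e)"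

definition Pi_extendible :: "'v::lattice set \<Rightarrow> ('v \<Rightarrow> 'e::ordered_ab_group_add) \<Rightarrow> bool" where
  "Pi_extendible D f \<longleftrightarrow> (\<exists>g. Pi_ext_prop D f g)"

definition Sig_extendible :: "'v::lattice set \<Rightarrow> ('v \<Rightarrow> 'e::ordered_ab_group_add) \<Rightarrow> bool" where
  "Sig_extendible D f \<longleftrightarrow> (\<exists>g. Sig_ext_prop D f g)"

definition PiFun :: "'v::lattice set \<Rightarrow> ('v \<Rightarrow> 'e::ordered_ab_group_add) \<Rightarrow> 'v \<Rightarrow> 'e" where
  "PiFun D f = (SOME g. Pi_ext_prop D f g)"

definition SigFun :: "'v::lattice set \<Rightarrow> ('v \<Rightarrow> 'e::ordered_ab_group_add) \<Rightarrow> 'v \<Rightarrow> 'e" where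
  "SigFun D f = (SOME g. Sig_ext_prop D f g)"

text \<open>A level is a triple (extendibility flag, domain, valuation).\<close>
type_synonym ('v, 'e) level = "bool \<times> 'v set \<times> ('v \<Rightarrow> 'e)"

definition ok_of :: "('v, 'e) level \<Rightarrow> bool" where "ok_of Q = fst Q"
definition dom_of :: "('v, 'e) level \<Rightarrow> 'v set" where "dom_of Q = fst (snd Q)"
definition fun_of :: "('v, 'e) level \<Rightarrow> 'v \<Rightarrow> 'e" where "fun_of Q = snd (snd Q)"

definition PiStep :: "('v::lattice, 'e::ordered_ab_group_add) level \<Rightarrow> ('v, 'e) level" where
  "PiStep Q = (ok_of Q \<and> Pi_extendible (dom_of Q) (fun_of Q),
               PiDom (dom_of Q) (fun_of Q), PiFun (dom_of Q) (fun_of Q))"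

definition SigStep :: "('v::lattice, 'e::ordered_ab_group_add) level \<Rightarrow> ('v, 'e) level" where
  "SigStep Q = (ok_of Q \<and> Sig_extendible (dom_of Q) (fun_of Q),
               SigDom (dom_of Q) (fun_of Q), SigFun (dom_of Q) (fun_of Q))"

definition lim_level :: "('i::wellorder \<Rightarrow> ('v, 'e) level) \<Rightarrow> 'i \<Rightarrow> ('v, 'e) level" where
  "lim_level G \<alpha> = ((\<forall>\<beta><\<alpha>. ok_of (G \<beta>)),
                     (\<Union>\<beta>\<in>{\<beta>. \<beta> < \<alpha>}. dom_of (G \<beta>)),
                     (\<lambda>x. fun_of (G (SOME \<beta>. \<beta> < \<alpha> \<and> x \<in> dom_of (G \<beta>))) x))"

definition is_zero :: "'i::wellorder \<Rightarrow> bool" where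
  "is_zero \<alpha> \<longleftrightarrow> (\<forall>\<beta>. \<not> \<beta> < \<alpha>)"

definition succ_of :: "'i::wellorder \<Rightarrow> 'i \<Rightarrow> bool" where
  "succ_of \<beta> \<alpha> \<longleftrightarrow> \<beta> < \<alpha> \<and> \<not> (\<exists>\<gamma>. \<beta> < \<gamma> \<and> \<gamma> < \<alpha>)"

definition hier_step :: "'v::lattice set \<Rightarrow> ('v \<Rightarrow> 'e::ordered_ab_group_add) \<Rightarrow>
    ('i::wellorder \<Rightarrow> ('v, 'e) level \<times> ('v, 'e) level) \<Rightarrow> 'i \<Rightarrow> ('v, 'e) level \<times> ('v, 'e) level" where
  "hier_step L \<phi> h \<alpha> =
     (if is_zero \<alpha> then ((True, L, \<phi>), (True, L, \<phi>))
      else if (\<exists>\<beta>. succ_of \<beta> \<alpha>) then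
        (let \<beta> = (SOME \<beta>. succ_of \<beta> \<alpha>) in (PiStep (snd (h \<beta>)), SigStep (fst (h \<beta>))))
      else (lim_level (\<lambda>\<beta>. fst (h \<beta>)) \<alpha>, lim_level (\<lambda>\<beta>. snd (h \<beta>)) \<alpha>))"

definition hier :: "'v::lattice set \<Rightarrow> ('v \<Rightarrow> 'e::ordered_ab_group_add) \<Rightarrow>
    'i::wellorder \<Rightarrow> ('v, 'e) level \<times> ('v, 'e) level" where
  "hier L \<phi> = wfrec {(x, y). x < y} (hier_step L \<phi>)"

definition PiH :: "'v::lattice set \<Rightarrow> ('v \<Rightarrow> 'e::ordered_ab_group_add) \<Rightarrow> 'i::wellorder \<Rightarrow> ('v, 'e) level" where
  "PiH L \<phi> \<alpha> = fst (hier L \<phi> \<alpha>)"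

definition SigH :: "'v::lattice set \<Rightarrow> ('v \<Rightarrow> 'e::ordered_ab_group_add) \<Rightarrow> 'i::wellorder \<Rightarrow> ('v, 'e) level" where
  "SigH L \<phi> \<alpha> = snd (hier L \<phi> \<alpha>)"

text \<open>The hierarchy has collapsed at Q (= Pi_alpha or Sigma_alpha).
  PiStep (SigH alpha) is Pi_{alpha+1}, SigStep (PiH alpha) is Sigma_{alpha+1}.\<close>
definition collapsed_at :: "'v::lattice set \<Rightarrow> ('v \<Rightarrow> 'e::ordered_ab_group_add) \<Rightarrow> 'i::wellorder \<Rightarrow>
    ('v, 'e) level \<Rightarrow> bool" where
  "collapsed_at L \<phi> \<alpha> Q \<longleftrightarrow>
     ok_of (PiStep (SigH L \<phi> \<alpha>)) \<and> ok_of (SigStep (PiH L \<phi> \<alpha>)) \<and>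
     (Q = PiH L \<phi> \<alpha> \<or> Q = SigH L \<phi> \<alpha>) \<and>
     Pi_extendible (dom_of Q) (fun_of Q) \<and> Sig_extendible (dom_of Q) (fun_of Q) \<and>
     PiDom (dom_of Q) (fun_of Q) = dom_of Q \<and>
     (\<forall>x\<in>dom_of Q. PiFun (dom_of Q) (fun_of Q) x = fun_of Q x) \<and>
     SigDom (dom_of Q) (fun_of Q) = dom_of Q \<and>
     (\<forall>x\<in>dom_of Q. SigFun (dom_of Q) (fun_of Q) x = fun_of Q x)"

text \<open>w plays the role of aleph_1 in the index well-order: uncountably many predecessors,
  each of which has countably many predecessors.\<close>
definition is_aleph1 :: "'i::wellorder \<Rightarrow> bool" where
  "is_aleph1 w \<longleftrightarrow> uncountable {j. j < w} \<and> (\<forall>j<w. countable {k. k < j})"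

end

theory Submission
  imports Defs
begin

(* For delta < beta both levels of the hierarchy at delta are extended by both levels at beta.
   Hence, once the hierarchy has collapsed at Q, Q is a common fixed point of Pi and Sigma and
   every later level is equivalent to Q; in particular Pi_{aleph_1} exists.
   Conversely, a sequence in the domain of Pi_{aleph_1} is drawn from countably many earlier
   levels, which by the uncountable cofinality of aleph_1 all lie below some level j < aleph_1.
   So the limit of a convergent monotone sequence already lies in Pi_{j+1} or Sigma_{j+1},
   both contained in Pi_{aleph_1}: the latter is closed under both extensions, i.e. the
   hierarchy collapses there, and by the first part every collapse value equals it. *)

lemma succ_of_less: "succ_of \<beta> \<alpha> \<Longrightarrow> \<beta> < \<alpha>"
  unfolding succ_of_def by auto

lemma succ_of_le: "succ_of (\<beta>::'i::wellorder) \<alpha> \<Longrightarrow> \<gamma> < \<alpha> \<Longrightarrow> \<gamma> \<le> \<beta>"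
  unfolding succ_of_def by (metis not_le)

lemma succ_of_pred_unique: "succ_of (\<beta>::'i::wellorder) \<alpha> \<Longrightarrow> succ_of \<beta>' \<alpha> \<Longrightarrow> \<beta> = \<beta>'"
  unfolding succ_of_def by (metis neq_iff)

lemma succ_of_exists:
  fixes \<delta> :: "'i::wellorder"
  assumes "\<delta> < \<gamma>"
  obtains s where "succ_of \<delta> s" "s \<le> \<gamma>"
proof
  let ?s = "LEAST s. \<delta> < s"
  show "succ_of \<delta> ?s"
    unfolding succ_of_def using LeastI[of "\<lambda>s. \<delta> < s", OF assms] not_less_Least by blast
  show "?s \<le> \<gamma>" using Least_le[of "\<lambda>s. \<delta> < s", OF assms] .
qed

lemma is_zero_not_less: "is_zero \<alpha> \<Longrightarrow> \<not> \<beta> < \<alpha>"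
  unfolding is_zero_def by auto

definition limit_ord :: "'i::wellorder \<Rightarrow> bool" where
  "limit_ord \<alpha> \<longleftrightarrow> \<not> is_zero \<alpha> \<and> \<not> (\<exists>\<beta>. succ_of \<beta> \<alpha>)"

lemma ordinal_cases:
  fixes \<alpha> :: "'i::wellorder"
  obtains "is_zero \<alpha>" | \<beta> where "succ_of \<beta> \<alpha>" | "limit_ord \<alpha>"
  unfolding limit_ord_def by blast

lemma limit_ord_succ_less:
  fixes \<delta> :: "'i::wellorder"
  assumes "limit_ord \<alpha>" "\<delta> < \<alpha>"
  obtains s where "succ_of \<delta> s" "s < \<alpha>"
proof -
  obtain s where s: "succ_of \<delta> s" "s \<le> \<alpha>" using succ_of_exists[OF assms(2)] .
  moreover have "s \<noteq> \<alpha>" using s(1) assms(1) unfolding limit_ord_def by blast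
  ultimately show thesis using that by simp
qed

lemma is_aleph1_limit_ord:
  fixes w :: "'i::wellorder"
  assumes "is_aleph1 w"
  shows "limit_ord w"
proof -
  have unc: "uncountable {j. j < w}" and cnt: "\<forall>j<w. countable {k. k < j}"
    using assms unfolding is_aleph1_def by auto
  have "{j. j < w} \<noteq> {}" using unc by (metis countable_empty)
  then have "\<not> is_zero w" unfolding is_zero_def by auto
  moreover have "\<not> succ_of \<beta> w" for \<beta>
  proof
    assume \<beta>: "succ_of \<beta> w"
    then have "{j. j < w} \<subseteq> insert \<beta> {k. k < \<beta>}" using succ_of_le by fastforce
    moreover have "countable (insert \<beta> {k. k < \<beta>})" using cnt succ_of_less[OF \<beta>] by simp
    ultimately show False using unc countable_subset by blast
  qed
  ultimately show ?thesis unfolding limit_ord_def by blast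
qed

lemma is_aleph1_bound:
  fixes w :: "'i::wellorder" and \<delta> :: "nat \<Rightarrow> 'i"
  assumes "is_aleph1 w" "\<forall>n. \<delta> n < w"
  obtains j where "j < w" "\<forall>n. \<delta> n < j"
proof -
  have unc: "uncountable {j. j < w}" and cnt: "\<forall>j<w. countable {k. k < j}"
    using assms(1) unfolding is_aleph1_def by auto
  have "{k. k \<le> \<delta> n} = insert (\<delta> n) {k. k < \<delta> n}" for n by auto
  then have "countable (\<Union>n. {k. k \<le> \<delta> n})"
    using cnt assms(2) by (intro countable_UN) auto
  then have "\<not> {j. j < w} \<subseteq> (\<Union>n. {k. k \<le> \<delta> n})" using unc countable_subset by blast
  then obtain j where "j < w" "\<forall>n. \<not> j \<le> \<delta> n" by blast
  then show thesis using that by (simp add: not_le)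
qed

lemma hier_unfold:
  "hier L \<phi> \<alpha> = hier_step L \<phi> (cut (hier L \<phi>) {(x,y). x < y} \<alpha>) \<alpha>"
  unfolding hier_def by (rule wfrec[OF wf])

lemma hier_zero:
  "is_zero \<alpha> \<Longrightarrow> PiH L \<phi> \<alpha> = (True, L, \<phi>) \<and> SigH L \<phi> \<alpha> = (True, L, \<phi>)"
  by (simp add: PiH_def SigH_def hier_unfold[of L \<phi> \<alpha>] hier_step_def)

lemma hier_succ:
  assumes "succ_of \<beta> \<alpha>"
  shows "PiH L \<phi> \<alpha> = PiStep (SigH L \<phi> \<beta>) \<and> SigH L \<phi> \<alpha> = SigStep (PiH L \<phi> \<beta>)"
proof -
  have "\<not> is_zero \<alpha>" using assms is_zero_not_less succ_of_less by blast
  moreover have "(SOME \<beta>. succ_of \<beta> \<alpha>) = \<beta>" using assms succ_of_pred_unique by blast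
  ultimately show ?thesis using assms succ_of_less[OF assms]
    by (auto simp: PiH_def SigH_def hier_unfold[of L \<phi> \<alpha>] hier_step_def cut_apply)
qed

definition level_limit :: "('v, 'e) level \<Rightarrow> ('i::wellorder \<Rightarrow> ('v, 'e) level) \<Rightarrow> 'i \<Rightarrow> bool" where
  "level_limit A G \<alpha> \<longleftrightarrow> dom_of A = (\<Union>\<beta>\<in>{\<beta>. \<beta> < \<alpha>}. dom_of (G \<beta>)) \<and>
     (\<forall>x\<in>dom_of A. \<exists>\<beta><\<alpha>. x \<in> dom_of (G \<beta>) \<and> fun_of A x = fun_of (G \<beta>) x)"

lemma lim_level_level_limit:
  assumes "\<forall>\<beta><\<alpha>. G \<beta> = G' \<beta>"
  shows "ok_of (lim_level G \<alpha>) = (\<forall>\<beta><\<alpha>. ok_of (G' \<beta>)) \<and> level_limit (lim_level G \<alpha>) G' \<alpha>"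
proof -
  have "ok_of (lim_level G \<alpha>) = (\<forall>\<beta><\<alpha>. ok_of (G' \<beta>))"
    using assms by (simp add: lim_level_def ok_of_def)
  moreover have "dom_of (lim_level G \<alpha>) = (\<Union>\<beta>\<in>{\<beta>. \<beta> < \<alpha>}. dom_of (G' \<beta>))"
    using assms by (simp add: lim_level_def dom_of_def)
  moreover have "\<exists>\<beta><\<alpha>. x \<in> dom_of (G' \<beta>) \<and> fun_of (lim_level G \<alpha>) x = fun_of (G' \<beta>) x"
    if "x \<in> dom_of (lim_level G \<alpha>)" for x
  proof -
    let ?b = "SOME \<beta>. \<beta> < \<alpha> \<and> x \<in> dom_of (G \<beta>)"
    from that have "\<exists>\<beta>. \<beta> < \<alpha> \<and> x \<in> dom_of (G \<beta>)" by (simp add: lim_level_def dom_of_def)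
    then have "?b < \<alpha> \<and> x \<in> dom_of (G ?b)" by (rule someI_ex)
    moreover have "fun_of (lim_level G \<alpha>) x = fun_of (G ?b) x"
      by (simp add: lim_level_def fun_of_def)
    ultimately show ?thesis using assms by auto
  qed
  ultimately show ?thesis unfolding level_limit_def by blast
qed

lemma hier_limit:
  assumes "limit_ord \<alpha>"
  shows "ok_of (PiH L \<phi> \<alpha>) = (\<forall>\<beta><\<alpha>. ok_of (PiH L \<phi> \<beta>)) \<and> level_limit (PiH L \<phi> \<alpha>) (PiH L \<phi>) \<alpha>"
    and "ok_of (SigH L \<phi> \<alpha>) = (\<forall>\<beta><\<alpha>. ok_of (SigH L \<phi> \<beta>)) \<and> level_limit (SigH L \<phi> \<alpha>) (SigH L \<phi>) \<alpha>"
proof -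
  let ?c = "cut (hier L \<phi>) {(x,y). x < y} \<alpha>"
  have Pi: "PiH L \<phi> \<alpha> = lim_level (\<lambda>\<beta>. fst (?c \<beta>)) \<alpha>"
    and Sig: "SigH L \<phi> \<alpha> = lim_level (\<lambda>\<beta>. snd (?c \<beta>)) \<alpha>"
    using assms by (simp_all add: PiH_def SigH_def hier_unfold[of L \<phi> \<alpha>] hier_step_def limit_ord_def)
  have "\<forall>\<beta><\<alpha>. fst (?c \<beta>) = PiH L \<phi> \<beta>" "\<forall>\<beta><\<alpha>. snd (?c \<beta>) = SigH L \<phi> \<beta>"
    by (simp_all add: cut_apply PiH_def SigH_def)
  from this[THEN lim_level_level_limit] show
    "ok_of (PiH L \<phi> \<alpha>) = (\<forall>\<beta><\<alpha>. ok_of (PiH L \<phi> \<beta>)) \<and> level_limit (PiH L \<phi> \<alpha>) (PiH L \<phi>) \<alpha>"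
    "ok_of (SigH L \<phi> \<alpha>) = (\<forall>\<beta><\<alpha>. ok_of (SigH L \<phi> \<beta>)) \<and> level_limit (SigH L \<phi> \<alpha>) (SigH L \<phi>) \<alpha>"
    unfolding Pi Sig .
qed

definition sublevel :: "('v, 'e) level \<Rightarrow> ('v, 'e) level \<Rightarrow> bool" where
  "sublevel P Q \<longleftrightarrow> dom_of P \<subseteq> dom_of Q \<and> (\<forall>x\<in>dom_of P. fun_of P x = fun_of Q x)"

definition level_equiv :: "('v, 'e) level \<Rightarrow> ('v, 'e) level \<Rightarrow> bool" where
  "level_equiv P Q \<longleftrightarrow> sublevel P Q \<and> sublevel Q P"

lemma sublevel_refl: "sublevel P P"
  unfolding sublevel_def by auto

lemma sublevel_trans: "sublevel P Q \<Longrightarrow> sublevel Q R \<Longrightarrow> sublevel P R"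
  unfolding sublevel_def by (auto simp: subset_iff)

lemma level_equiv_iff:
  "level_equiv P Q \<longleftrightarrow> dom_of P = dom_of Q \<and> (\<forall>x\<in>dom_of Q. fun_of P x = fun_of Q x)"
  unfolding level_equiv_def sublevel_def by auto

lemma level_equiv_sym: "level_equiv P Q \<Longrightarrow> level_equiv Q P"
  unfolding level_equiv_def by auto

lemma level_equiv_trans: "level_equiv P Q \<Longrightarrow> level_equiv Q R \<Longrightarrow> level_equiv P R"
  unfolding level_equiv_def using sublevel_trans by blast

lemma level_limit_sublevel:
  assumes "level_limit A G \<alpha>" "\<forall>\<beta><\<alpha>. sublevel (G \<beta>) Q"
  shows "sublevel A Q"
  using assms unfolding level_limit_def sublevel_def by (metis subsetD subsetI)

definition level_chain :: "('i::wellorder \<Rightarrow> ('v, 'e) level) \<Rightarrow> 'i \<Rightarrow> bool" where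
  "level_chain G \<alpha> \<longleftrightarrow> (\<forall>\<zeta> \<eta>. \<zeta> \<le> \<eta> \<longrightarrow> \<eta> < \<alpha> \<longrightarrow> sublevel (G \<zeta>) (G \<eta>))"

lemma level_chain_comparable:
  assumes "level_chain G \<alpha>" "\<zeta> < \<alpha>" "\<eta> < \<alpha>"
  shows "sublevel (G \<zeta>) (G \<eta>) \<or> sublevel (G \<eta>) (G \<zeta>)"
proof (cases "\<zeta> \<le> \<eta>")
  case True
  then show ?thesis using assms unfolding level_chain_def by blast
next
  case False
  then show ?thesis using assms unfolding level_chain_def by (simp add: not_le less_imp_le)
qed

lemma sublevel_level_limit:
  assumes A: "level_limit A G \<alpha>" and G: "level_chain G \<alpha>" and "\<delta> < \<alpha>"
  shows "sublevel (G \<delta>) A"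
  unfolding sublevel_def
proof (intro conjI ballI subsetI)
  fix x assume x: "x \<in> dom_of (G \<delta>)"
  then show "x \<in> dom_of A" using A \<open>\<delta> < \<alpha>\<close> unfolding level_limit_def by auto
  then obtain \<beta> where \<beta>: "\<beta> < \<alpha>" "x \<in> dom_of (G \<beta>)" "fun_of A x = fun_of (G \<beta>) x"
    using A unfolding level_limit_def by blast
  have "fun_of (G \<beta>) x = fun_of (G \<delta>) x"
    using level_chain_comparable[OF G \<beta>(1) \<open>\<delta> < \<alpha>\<close>] x \<beta>(2) unfolding sublevel_def by metis
  with \<beta>(3) show "fun_of (G \<delta>) x = fun_of A x" by simp
qed

lemma valuation_level_limit:
  assumes A: "level_limit A G \<alpha>" and G: "level_chain G \<alpha>"
    and val: "\<forall>\<beta><\<alpha>. valuation_on (dom_of (G \<beta>)) (fun_of (G \<beta>))"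
  shows "valuation_on (dom_of A) (fun_of A)"
proof -
  have dom: "dom_of A = (\<Union>\<beta>\<in>{\<beta>. \<beta> < \<alpha>}. dom_of (G \<beta>))"
    using A unfolding level_limit_def by blast
  have common: "\<exists>\<beta><\<alpha>. a \<in> dom_of (G \<beta>) \<and> b \<in> dom_of (G \<beta>)"
    if ab: "a \<in> dom_of A" "b \<in> dom_of A" for a b
  proof -
    obtain \<zeta> \<eta> where \<zeta>: "\<zeta> < \<alpha>" "a \<in> dom_of (G \<zeta>)" and \<eta>: "\<eta> < \<alpha>" "b \<in> dom_of (G \<eta>)"
      using ab[unfolded dom] by blast
    from level_chain_comparable[OF G \<zeta>(1) \<eta>(1)] show ?thesis
    proof
      assume "sublevel (G \<zeta>) (G \<eta>)"
      then show ?thesis using \<zeta> \<eta> unfolding sublevel_def by blast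
    next
      assume "sublevel (G \<eta>) (G \<zeta>)"
      then show ?thesis using \<zeta> \<eta> unfolding sublevel_def by blast
    qed
  qed
  have "inf a b \<in> dom_of A \<and> sup a b \<in> dom_of A \<and> (a \<le> b \<longrightarrow> fun_of A a \<le> fun_of A b) \<and>
     fun_of A (inf a b) + fun_of A (sup a b) = fun_of A a + fun_of A b"
    if ab: "a \<in> dom_of A" "b \<in> dom_of A" for a b
  proof -
    obtain \<beta> where \<beta>: "\<beta> < \<alpha>" "a \<in> dom_of (G \<beta>)" "b \<in> dom_of (G \<beta>)"
      using common[OF ab] by blast
    then have "valuation_on (dom_of (G \<beta>)) (fun_of (G \<beta>))" "sublevel (G \<beta>) A"
      using val sublevel_level_limit[OF A G] by auto
    with \<beta> show ?thesis unfolding valuation_on_def sublattice_def sublevel_def by (auto simp: subset_iff)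
  qed
  then show ?thesis unfolding valuation_on_def sublattice_def by blast
qed

lemma inf_of_const: "inf_of (\<lambda>n. x) x"
  unfolding inf_of_def by auto

lemma sup_of_const: "sup_of (\<lambda>n. x) x"
  unfolding sup_of_def by auto

lemma conv_dec_const: "x \<in> D \<Longrightarrow> conv_dec D f (\<lambda>n. x)"
  unfolding conv_dec_def using inf_of_const[of x] inf_of_const[of "f x"] by blast

lemma conv_inc_const: "x \<in> D \<Longrightarrow> conv_inc D f (\<lambda>n. x)"
  unfolding conv_inc_def using sup_of_const[of x] sup_of_const[of "f x"] by blast

lemma conv_dec_transfer:
  assumes "conv_dec D f a" "\<forall>n. a n \<in> D' \<and> f' (a n) = f (a n)"
  shows "conv_dec D' f' a"
  using assms unfolding conv_dec_def by simp

lemma conv_inc_transfer: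
  assumes "conv_inc D f a" "\<forall>n. a n \<in> D' \<and> f' (a n) = f (a n)"
  shows "conv_inc D' f' a"
  using assms unfolding conv_inc_def by simp

lemma subset_PiDom: "D \<subseteq> PiDom D f"
  unfolding PiDom_def using conv_dec_const inf_of_const by blast

lemma subset_SigDom: "D \<subseteq> SigDom D f"
  unfolding SigDom_def using conv_inc_const sup_of_const by blast

lemma Pi_ext_prop_PiFun: "Pi_extendible D f \<Longrightarrow> Pi_ext_prop D f (PiFun D f)"
  unfolding Pi_extendible_def PiFun_def by (rule someI_ex[of "Pi_ext_prop D f"])

lemma Sig_ext_prop_SigFun: "Sig_extendible D f \<Longrightarrow> Sig_ext_prop D f (SigFun D f)"
  unfolding Sig_extendible_def SigFun_def by (rule someI_ex[of "Sig_ext_prop D f"])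

lemma PiFun_inf_of:
  assumes "Pi_extendible D f" "conv_dec D f a" "inf_of a x" "inf_of (\<lambda>n. f (a n)) e"
  shows "x \<in> PiDom D f \<and> PiFun D f x = e"
  using Pi_ext_prop_PiFun[OF assms(1)] assms(2-) unfolding Pi_ext_prop_def PiDom_def by blast

lemma SigFun_sup_of:
  assumes "Sig_extendible D f" "conv_inc D f a" "sup_of a x" "sup_of (\<lambda>n. f (a n)) e"
  shows "x \<in> SigDom D f \<and> SigFun D f x = e"
  using Sig_ext_prop_SigFun[OF assms(1)] assms(2-) unfolding Sig_ext_prop_def SigDom_def by blast

lemma valuation_PiFun: "Pi_extendible D f \<Longrightarrow> valuation_on (PiDom D f) (PiFun D f)"
  using Pi_ext_prop_PiFun unfolding Pi_ext_prop_def by blast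

lemma valuation_SigFun: "Sig_extendible D f \<Longrightarrow> valuation_on (SigDom D f) (SigFun D f)"
  using Sig_ext_prop_SigFun unfolding Sig_ext_prop_def by blast

lemma PiFun_eq: "Pi_extendible D f \<Longrightarrow> x \<in> D \<Longrightarrow> PiFun D f x = f x"
  using PiFun_inf_of[OF _ conv_dec_const inf_of_const inf_of_const] by blast

lemma SigFun_eq: "Sig_extendible D f \<Longrightarrow> x \<in> D \<Longrightarrow> SigFun D f x = f x"
  using SigFun_sup_of[OF _ conv_inc_const sup_of_const sup_of_const] by blast

lemma Pi_extendible_closed:
  assumes val: "valuation_on D f"
    and closed: "\<And>a x e. conv_dec D f a \<Longrightarrow> inf_of a x \<Longrightarrow> inf_of (\<lambda>n. f (a n)) e \<Longrightarrow> x \<in> D \<and> f x = e"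
  shows "Pi_extendible D f \<and> PiDom D f = D \<and> (\<forall>x\<in>D. PiFun D f x = f x)"
proof -
  have "x \<in> D" if x: "x \<in> PiDom D f" for x
  proof -
    obtain a e where "conv_dec D f a" "inf_of a x" "inf_of (\<lambda>n. f (a n)) e"
      using x unfolding PiDom_def conv_dec_def by blast
    then show ?thesis using closed by blast
  qed
  then have dom: "PiDom D f = D" using subset_PiDom by blast
  then have "Pi_ext_prop D f f"
    unfolding Pi_ext_prop_def using val closed by auto
  then have "Pi_extendible D f" unfolding Pi_extendible_def by blast
  with dom show ?thesis using PiFun_eq by blast
qed

lemma Sig_extendible_closed:
  assumes val: "valuation_on D f"
    and closed: "\<And>a x e. conv_inc D f a \<Longrightarrow> sup_of a x \<Longrightarrow> sup_of (\<lambda>n. f (a n)) e \<Longrightarrow> x \<in> D \<and> f x = e"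
  shows "Sig_extendible D f \<and> SigDom D f = D \<and> (\<forall>x\<in>D. SigFun D f x = f x)"
proof -
  have "x \<in> D" if x: "x \<in> SigDom D f" for x
  proof -
    obtain a e where "conv_inc D f a" "sup_of a x" "sup_of (\<lambda>n. f (a n)) e"
      using x unfolding SigDom_def conv_inc_def by blast
    then show ?thesis using closed by blast
  qed
  then have dom: "SigDom D f = D" using subset_SigDom by blast
  then have "Sig_ext_prop D f f"
    unfolding Sig_ext_prop_def using val closed by auto
  then have "Sig_extendible D f" unfolding Sig_extendible_def by blast
  with dom show ?thesis using SigFun_eq by blast
qed

lemma conv_dec_cong: "\<forall>x\<in>D. f x = g x \<Longrightarrow> conv_dec D f a = conv_dec D g a"
  unfolding conv_dec_def by auto

lemma conv_inc_cong: "\<forall>x\<in>D. f x = g x \<Longrightarrow> conv_inc D f a = conv_inc D g a"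
  unfolding conv_inc_def by auto

lemma Pi_ext_prop_cong:
  assumes "\<forall>x\<in>D. f x = g x"
  shows "PiDom D f = PiDom D g" "Pi_ext_prop D f h = Pi_ext_prop D g h"
proof -
  show dom: "PiDom D f = PiDom D g" unfolding PiDom_def using conv_dec_cong[OF assms] by simp
  have "conv_dec D f a \<Longrightarrow> (\<lambda>n. f (a n)) = (\<lambda>n. g (a n))" for a
    using assms unfolding conv_dec_def by auto
  then show "Pi_ext_prop D f h = Pi_ext_prop D g h"
    unfolding Pi_ext_prop_def dom using conv_dec_cong[OF assms] by metis
qed

lemma Sig_ext_prop_cong:
  assumes "\<forall>x\<in>D. f x = g x"
  shows "SigDom D f = SigDom D g" "Sig_ext_prop D f h = Sig_ext_prop D g h"
proof -
  show dom: "SigDom D f = SigDom D g" unfolding SigDom_def using conv_inc_cong[OF assms] by simp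
  have "conv_inc D f a \<Longrightarrow> (\<lambda>n. f (a n)) = (\<lambda>n. g (a n))" for a
    using assms unfolding conv_inc_def by auto
  then show "Sig_ext_prop D f h = Sig_ext_prop D g h"
    unfolding Sig_ext_prop_def dom using conv_inc_cong[OF assms] by metis
qed

lemma ok_PiStep [simp]: "ok_of (PiStep Q) \<longleftrightarrow> ok_of Q \<and> Pi_extendible (dom_of Q) (fun_of Q)"
  by (simp add: PiStep_def ok_of_def)

lemma ok_SigStep [simp]: "ok_of (SigStep Q) \<longleftrightarrow> ok_of Q \<and> Sig_extendible (dom_of Q) (fun_of Q)"
  by (simp add: SigStep_def ok_of_def)

lemma dom_PiStep [simp]: "dom_of (PiStep Q) = PiDom (dom_of Q) (fun_of Q)"
  by (simp add: PiStep_def dom_of_def)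

lemma dom_SigStep [simp]: "dom_of (SigStep Q) = SigDom (dom_of Q) (fun_of Q)"
  by (simp add: SigStep_def dom_of_def)

lemma fun_PiStep [simp]: "fun_of (PiStep Q) = PiFun (dom_of Q) (fun_of Q)"
  by (simp add: PiStep_def fun_of_def)

lemma fun_SigStep [simp]: "fun_of (SigStep Q) = SigFun (dom_of Q) (fun_of Q)"
  by (simp add: SigStep_def fun_of_def)

lemma sublevel_PiStep: "Pi_extendible (dom_of Q) (fun_of Q) \<Longrightarrow> sublevel Q (PiStep Q)"
  unfolding sublevel_def by (simp add: subset_PiDom PiFun_eq)

lemma sublevel_SigStep: "Sig_extendible (dom_of Q) (fun_of Q) \<Longrightarrow> sublevel Q (SigStep Q)"
  unfolding sublevel_def by (simp add: subset_SigDom SigFun_eq)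

lemma PiStep_mono:
  assumes PQ: "sublevel P Q"
    and P: "Pi_extendible (dom_of P) (fun_of P)" and Q: "Pi_extendible (dom_of Q) (fun_of Q)"
  shows "sublevel (PiStep P) (PiStep Q)"
  unfolding sublevel_def dom_PiStep fun_PiStep
proof (intro conjI ballI subsetI)
  fix x assume "x \<in> PiDom (dom_of P) (fun_of P)"
  then obtain a e where a: "conv_dec (dom_of P) (fun_of P) a" "inf_of a x"
    and e: "inf_of (\<lambda>n. fun_of P (a n)) e"
    unfolding PiDom_def conv_dec_def by blast
  have "\<forall>n. a n \<in> dom_of Q \<and> fun_of Q (a n) = fun_of P (a n)"
    using a(1) PQ unfolding conv_dec_def sublevel_def by auto
  then have "conv_dec (dom_of Q) (fun_of Q) a" "inf_of (\<lambda>n. fun_of Q (a n)) e"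
    using conv_dec_transfer[OF a(1)] e by simp_all
  then have "x \<in> PiDom (dom_of Q) (fun_of Q) \<and> PiFun (dom_of Q) (fun_of Q) x = e"
    using PiFun_inf_of[OF Q _ a(2)] by blast
  moreover have "PiFun (dom_of P) (fun_of P) x = e" using PiFun_inf_of[OF P a e] by blast
  ultimately show "x \<in> PiDom (dom_of Q) (fun_of Q)"
    and "PiFun (dom_of P) (fun_of P) x = PiFun (dom_of Q) (fun_of Q) x" by simp_all
qed

lemma SigStep_mono:
  assumes PQ: "sublevel P Q"
    and P: "Sig_extendible (dom_of P) (fun_of P)" and Q: "Sig_extendible (dom_of Q) (fun_of Q)"
  shows "sublevel (SigStep P) (SigStep Q)"
  unfolding sublevel_def dom_SigStep fun_SigStep
proof (intro conjI ballI subsetI)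
  fix x assume "x \<in> SigDom (dom_of P) (fun_of P)"
  then obtain a e where a: "conv_inc (dom_of P) (fun_of P) a" "sup_of a x"
    and e: "sup_of (\<lambda>n. fun_of P (a n)) e"
    unfolding SigDom_def conv_inc_def by blast
  have "\<forall>n. a n \<in> dom_of Q \<and> fun_of Q (a n) = fun_of P (a n)"
    using a(1) PQ unfolding conv_inc_def sublevel_def by auto
  then have "conv_inc (dom_of Q) (fun_of Q) a" "sup_of (\<lambda>n. fun_of Q (a n)) e"
    using conv_inc_transfer[OF a(1)] e by simp_all
  then have "x \<in> SigDom (dom_of Q) (fun_of Q) \<and> SigFun (dom_of Q) (fun_of Q) x = e"
    using SigFun_sup_of[OF Q _ a(2)] by blast
  moreover have "SigFun (dom_of P) (fun_of P) x = e" using SigFun_sup_of[OF P a e] by blast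
  ultimately show "x \<in> SigDom (dom_of Q) (fun_of Q)"
    and "SigFun (dom_of P) (fun_of P) x = SigFun (dom_of Q) (fun_of Q) x" by simp_all
qed

lemma level_equiv_PiStep:
  assumes "level_equiv P Q"
  shows "Pi_extendible (dom_of P) (fun_of P) \<longleftrightarrow> Pi_extendible (dom_of Q) (fun_of Q)"
    and "level_equiv (PiStep P) (PiStep Q)"
proof -
  have dom: "dom_of P = dom_of Q" and "\<forall>x\<in>dom_of Q. fun_of P x = fun_of Q x"
    using assms unfolding level_equiv_iff by auto
  note cong = Pi_ext_prop_cong[OF this(2)]
  show "Pi_extendible (dom_of P) (fun_of P) \<longleftrightarrow> Pi_extendible (dom_of Q) (fun_of Q)"
    unfolding Pi_extendible_def dom cong(2) ..
  show "level_equiv (PiStep P) (PiStep Q)"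
    unfolding level_equiv_iff dom_PiStep fun_PiStep PiFun_def dom cong by simp
qed

lemma level_equiv_SigStep:
  assumes "level_equiv P Q"
  shows "Sig_extendible (dom_of P) (fun_of P) \<longleftrightarrow> Sig_extendible (dom_of Q) (fun_of Q)"
    and "level_equiv (SigStep P) (SigStep Q)"
proof -
  have dom: "dom_of P = dom_of Q" and "\<forall>x\<in>dom_of Q. fun_of P x = fun_of Q x"
    using assms unfolding level_equiv_iff by auto
  note cong = Sig_ext_prop_cong[OF this(2)]
  show "Sig_extendible (dom_of P) (fun_of P) \<longleftrightarrow> Sig_extendible (dom_of Q) (fun_of Q)"
    unfolding Sig_extendible_def dom cong(2) ..
  show "level_equiv (SigStep P) (SigStep Q)"
    unfolding level_equiv_iff dom_SigStep fun_SigStep SigFun_def dom cong by simp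
qed

section \<open>The hierarchy is increasing\<close>

definition hier_ok :: "'v::lattice set \<Rightarrow> ('v \<Rightarrow> 'e::ordered_ab_group_add) \<Rightarrow> 'i::wellorder \<Rightarrow> bool" where
  "hier_ok L \<phi> \<alpha> \<longleftrightarrow> ok_of (PiH L \<phi> \<alpha>) \<and> ok_of (SigH L \<phi> \<alpha>)"

lemma hier_ok_succ:
  assumes "succ_of \<eta> \<beta>"
  shows "hier_ok L \<phi> \<beta> \<longleftrightarrow> hier_ok L \<phi> \<eta> \<and>
    Pi_extendible (dom_of (SigH L \<phi> \<eta>)) (fun_of (SigH L \<phi> \<eta>)) \<and>
    Sig_extendible (dom_of (PiH L \<phi> \<eta>)) (fun_of (PiH L \<phi> \<eta>))"
  using hier_succ[OF assms, of L \<phi>] by (auto simp: hier_ok_def)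

lemma hier_ok_le:
  fixes \<beta> :: "'i::wellorder"
  shows "hier_ok L \<phi> \<beta> \<Longrightarrow> \<gamma> \<le> \<beta> \<Longrightarrow> hier_ok L \<phi> \<gamma>"
proof (induction \<beta> rule: less_induct)
  case (less \<beta>)
  show ?case
  proof (cases "\<gamma> = \<beta>")
    case False
    with less.prems have "\<gamma> < \<beta>" by simp
    from ordinal_cases[of \<beta>] show ?thesis
    proof cases
      case 1
      with \<open>\<gamma> < \<beta>\<close> show ?thesis using is_zero_not_less by blast
    next
      case (2 \<eta>)
      then show ?thesis
        using less hier_ok_succ succ_of_less succ_of_le \<open>\<gamma> < \<beta>\<close> by blast
    next
      case 3
      then show ?thesis using less.prems(1) hier_limit[OF 3, of L \<phi>] \<open>\<gamma> < \<beta>\<close> by (auto simp: hier_ok_def)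
    qed
  qed (use less.prems in simp)
qed

definition hier_le :: "'v::lattice set \<Rightarrow> ('v \<Rightarrow> 'e::ordered_ab_group_add) \<Rightarrow> 'i::wellorder \<Rightarrow> 'i \<Rightarrow> bool" where
  "hier_le L \<phi> \<delta> \<beta> \<longleftrightarrow>
     sublevel (PiH L \<phi> \<delta>) (PiH L \<phi> \<beta>) \<and> sublevel (SigH L \<phi> \<delta>) (SigH L \<phi> \<beta>) \<and>
     sublevel (PiH L \<phi> \<delta>) (SigH L \<phi> \<beta>) \<and> sublevel (SigH L \<phi> \<delta>) (PiH L \<phi> \<beta>)"

lemma hier_le_trans: "hier_le L \<phi> \<delta> \<eta> \<Longrightarrow> hier_le L \<phi> \<eta> \<beta> \<Longrightarrow> hier_le L \<phi> \<delta> \<beta>"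
  unfolding hier_le_def by (meson sublevel_trans)

lemma hier_le_succ:
  assumes s: "succ_of \<eta> \<beta>" and ok: "hier_ok L \<phi> \<beta>" and below: "\<forall>\<zeta><\<eta>. hier_le L \<phi> \<zeta> \<eta>"
  shows "hier_le L \<phi> \<eta> \<beta>"
proof -
  have Pi: "PiH L \<phi> \<beta> = PiStep (SigH L \<phi> \<eta>)" and Sig: "SigH L \<phi> \<beta> = SigStep (PiH L \<phi> \<eta>)"
    using hier_succ[OF s] by auto
  have ok\<eta>: "hier_ok L \<phi> \<eta>"
    and ext: "Pi_extendible (dom_of (SigH L \<phi> \<eta>)) (fun_of (SigH L \<phi> \<eta>))"
      "Sig_extendible (dom_of (PiH L \<phi> \<eta>)) (fun_of (PiH L \<phi> \<eta>))"
    using ok hier_ok_succ[OF s] by auto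
  have cross: "sublevel (SigH L \<phi> \<eta>) (PiH L \<phi> \<beta>)" "sublevel (PiH L \<phi> \<eta>) (SigH L \<phi> \<beta>)"
    unfolding Pi Sig using sublevel_PiStep[OF ext(1)] sublevel_SigStep[OF ext(2)] .
  from ordinal_cases[of \<eta>]
  have "sublevel (PiH L \<phi> \<eta>) (PiH L \<phi> \<beta>) \<and> sublevel (SigH L \<phi> \<eta>) (SigH L \<phi> \<beta>)"
  proof cases
    case 1
    then have "PiH L \<phi> \<eta> = SigH L \<phi> \<eta>" using hier_zero by metis
    with cross show ?thesis by simp
  next
    case (2 \<zeta>)
    have "Pi_extendible (dom_of (SigH L \<phi> \<zeta>)) (fun_of (SigH L \<phi> \<zeta>))"
      "Sig_extendible (dom_of (PiH L \<phi> \<zeta>)) (fun_of (PiH L \<phi> \<zeta>))"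
      using ok\<eta> hier_ok_succ[OF 2] by auto
    moreover have "sublevel (SigH L \<phi> \<zeta>) (SigH L \<phi> \<eta>)" "sublevel (PiH L \<phi> \<zeta>) (PiH L \<phi> \<eta>)"
      using below succ_of_less[OF 2] unfolding hier_le_def by blast+
    ultimately have "sublevel (PiStep (SigH L \<phi> \<zeta>)) (PiH L \<phi> \<beta>)"
      "sublevel (SigStep (PiH L \<phi> \<zeta>)) (SigH L \<phi> \<beta>)"
      unfolding Pi Sig using PiStep_mono[OF _ _ ext(1)] SigStep_mono[OF _ _ ext(2)] by blast+
    then show ?thesis using hier_succ[OF 2, of L \<phi>] by simp
  next
    case 3
    have "\<forall>\<zeta><\<eta>. sublevel (PiH L \<phi> \<zeta>) (PiH L \<phi> \<beta>)" "\<forall>\<zeta><\<eta>. sublevel (SigH L \<phi> \<zeta>) (SigH L \<phi> \<beta>)"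
      using below cross sublevel_trans unfolding hier_le_def by blast+
    then show ?thesis using level_limit_sublevel hier_limit[OF 3, of L \<phi>] by blast
  qed
  with cross show ?thesis unfolding hier_le_def by blast
qed

lemma hier_le_chain:
  assumes "\<forall>\<eta><\<beta>. \<forall>\<zeta><\<eta>. hier_le L \<phi> \<zeta> \<eta>"
  shows "level_chain (PiH L \<phi>) \<beta>" "level_chain (SigH L \<phi>) \<beta>"
  using assms sublevel_refl unfolding level_chain_def hier_le_def by (metis order.order_iff_strict)+

lemma hier_le:
  fixes \<beta> :: "'i::wellorder"
  shows "hier_ok L \<phi> \<beta> \<Longrightarrow> \<delta> < \<beta> \<Longrightarrow> hier_le L \<phi> \<delta> \<beta>"
proof (induction \<beta> arbitrary: \<delta> rule: less_induct)
  case (less \<beta>)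
  have IH: "\<forall>\<eta><\<beta>. \<forall>\<zeta><\<eta>. hier_le L \<phi> \<zeta> \<eta>"
    using less.IH hier_ok_le[OF less.prems(1)] by simp
  from ordinal_cases[of \<beta>] show ?case
  proof cases
    case 1
    then show ?thesis using is_zero_not_less less.prems(2) by blast
  next
    case (2 \<eta>)
    have "hier_le L \<phi> \<eta> \<beta>"
      using hier_le_succ[OF 2 less.prems(1)] IH succ_of_less[OF 2] by blast
    moreover have "\<delta> = \<eta> \<or> \<delta> < \<eta>" using succ_of_le[OF 2 less.prems(2)] by auto
    ultimately show ?thesis using IH succ_of_less[OF 2] hier_le_trans by blast
  next
    case 3
    note chain = hier_le_chain[OF IH]
    have "sublevel (PiH L \<phi> \<delta>) (PiH L \<phi> \<beta>)" "sublevel (SigH L \<phi> \<delta>) (SigH L \<phi> \<beta>)"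
      using sublevel_level_limit[OF _ chain(1)] sublevel_level_limit[OF _ chain(2)]
        hier_limit[OF 3, of L \<phi>] less.prems(2) by blast+
    moreover obtain s where "succ_of \<delta> s" "s < \<beta>" using limit_ord_succ_less[OF 3 less.prems(2)] .
    then have "hier_le L \<phi> \<delta> s" "sublevel (PiH L \<phi> s) (PiH L \<phi> \<beta>)" "sublevel (SigH L \<phi> s) (SigH L \<phi> \<beta>)"
      using IH succ_of_less sublevel_level_limit[OF _ chain(1)] sublevel_level_limit[OF _ chain(2)]
        hier_limit[OF 3, of L \<phi>] by blast+
    ultimately show ?thesis unfolding hier_le_def using sublevel_trans by blast
  qed
qed

lemma hier_limit_equiv:
  assumes "limit_ord \<beta>" "hier_ok L \<phi> \<beta>"
  shows "level_equiv (PiH L \<phi> \<beta>) (SigH L \<phi> \<beta>)"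
proof -
  have "\<forall>\<zeta><\<beta>. sublevel (PiH L \<phi> \<zeta>) (SigH L \<phi> \<beta>)" "\<forall>\<zeta><\<beta>. sublevel (SigH L \<phi> \<zeta>) (PiH L \<phi> \<beta>)"
    using hier_le[OF assms(2)] unfolding hier_le_def by blast+
  with hier_limit[OF assms(1), of L \<phi>] show ?thesis
    unfolding level_equiv_def using level_limit_sublevel by blast
qed

lemma hier_valuation:
  fixes \<beta> :: "'i::wellorder"
  assumes "valuation_on L \<phi>"
  shows "hier_ok L \<phi> \<beta> \<Longrightarrow> valuation_on (dom_of (PiH L \<phi> \<beta>)) (fun_of (PiH L \<phi> \<beta>)) \<and>
                             valuation_on (dom_of (SigH L \<phi> \<beta>)) (fun_of (SigH L \<phi> \<beta>))"
proof (induction \<beta> rule: less_induct)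
  case (less \<beta>)
  from ordinal_cases[of \<beta>] show ?case
  proof cases
    case 1
    then show ?thesis using hier_zero[OF 1, of L \<phi>] assms by (simp add: dom_of_def fun_of_def)
  next
    case (2 \<eta>)
    then show ?thesis
      using hier_succ[OF 2, of L \<phi>] hier_ok_succ[OF 2, of L \<phi>] less.prems
      by (simp add: valuation_PiFun valuation_SigFun)
  next
    case 3
    have "hier_le L \<phi> \<zeta> \<eta>" if "\<eta> < \<beta>" "\<zeta> < \<eta>" for \<zeta> \<eta>
      using hier_le[OF hier_ok_le[OF less.prems less_imp_le[OF that(1)]] that(2)] .
    then have "\<forall>\<eta><\<beta>. \<forall>\<zeta><\<eta>. hier_le L \<phi> \<zeta> \<eta>" by blast
    note chain = hier_le_chain[OF this]
    have "\<forall>\<eta><\<beta>. valuation_on (dom_of (PiH L \<phi> \<eta>)) (fun_of (PiH L \<phi> \<eta>))"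
      "\<forall>\<eta><\<beta>. valuation_on (dom_of (SigH L \<phi> \<eta>)) (fun_of (SigH L \<phi> \<eta>))"
      using less.IH hier_ok_le[OF less.prems] by simp_all
    with chain show ?thesis
      using valuation_level_limit hier_limit[OF 3, of L \<phi>] by metis
  qed
qed

section \<open>Stability after a collapse\<close>

definition fixed_level :: "('v::lattice, 'e::ordered_ab_group_add) level \<Rightarrow> bool" where
  "fixed_level Q \<longleftrightarrow> Pi_extendible (dom_of Q) (fun_of Q) \<and> Sig_extendible (dom_of Q) (fun_of Q) \<and>
     level_equiv (PiStep Q) Q \<and> level_equiv (SigStep Q) Q"

lemma collapsed_atD:
  assumes "collapsed_at L \<phi> \<alpha> Q"
  shows "hier_ok L \<phi> \<alpha>"
    and "Pi_extendible (dom_of (SigH L \<phi> \<alpha>)) (fun_of (SigH L \<phi> \<alpha>))"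
    and "Sig_extendible (dom_of (PiH L \<phi> \<alpha>)) (fun_of (PiH L \<phi> \<alpha>))"
    and "Q = PiH L \<phi> \<alpha> \<or> Q = SigH L \<phi> \<alpha>"
    and "fixed_level Q"
  using assms unfolding collapsed_at_def fixed_level_def hier_ok_def level_equiv_iff by auto

lemma collapsed_at_succ:
  assumes col: "collapsed_at L \<phi> \<alpha> Q" and s: "succ_of \<alpha> s"
  shows "hier_ok L \<phi> s \<and> level_equiv (PiH L \<phi> s) Q \<and> level_equiv (SigH L \<phi> s) Q"
proof -
  note c = collapsed_atD[OF col]
  have ok: "hier_ok L \<phi> s" using hier_ok_succ[OF s] c(1-3) by blast
  have le: "hier_le L \<phi> \<alpha> s" using hier_le[OF ok succ_of_less[OF s]] .
  have Pi: "PiH L \<phi> s = PiStep (SigH L \<phi> \<alpha>)" and Sig: "SigH L \<phi> s = SigStep (PiH L \<phi> \<alpha>)"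
    using hier_succ[OF s] by auto
  (* If Q = Pi_alpha then Sigma_s = Sigma Q is equivalent to Q, and Pi_s = Pi Sigma_alpha is
     squeezed between Q and Pi Q; symmetrically if Q = Sigma_alpha. *)
  from c(4) have "level_equiv (PiH L \<phi> s) Q \<and> level_equiv (SigH L \<phi> s) Q"
  proof
    assume Q: "Q = PiH L \<phi> \<alpha>"
    have SigQ: "level_equiv (SigH L \<phi> s) Q" using c(5) unfolding Sig Q fixed_level_def by blast
    then have "sublevel (SigH L \<phi> \<alpha>) Q"
      using le sublevel_trans unfolding hier_le_def level_equiv_def by blast
    then have "sublevel (PiH L \<phi> s) Q"
      using PiStep_mono[OF _ c(2)] c(5) sublevel_trans unfolding Pi fixed_level_def level_equiv_def by blast
    moreover have "sublevel Q (PiH L \<phi> s)" using le unfolding Q hier_le_def by blast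
    ultimately show ?thesis using SigQ unfolding level_equiv_def by blast
  next
    assume Q: "Q = SigH L \<phi> \<alpha>"
    have PiQ: "level_equiv (PiH L \<phi> s) Q" using c(5) unfolding Pi Q fixed_level_def by blast
    then have "sublevel (PiH L \<phi> \<alpha>) Q"
      using le sublevel_trans unfolding hier_le_def level_equiv_def by blast
    then have "sublevel (SigH L \<phi> s) Q"
      using SigStep_mono[OF _ c(3)] c(5) sublevel_trans unfolding Sig fixed_level_def level_equiv_def by blast
    moreover have "sublevel Q (SigH L \<phi> s)" using le unfolding Q hier_le_def by blast
    ultimately show ?thesis using PiQ unfolding level_equiv_def by blast
  qed
  with ok show ?thesis by blast
qed

lemma hier_stable:
  fixes s :: "'i::wellorder"
  assumes Q: "fixed_level Q"
    and base: "hier_ok L \<phi> s" "level_equiv (PiH L \<phi> s) Q" "level_equiv (SigH L \<phi> s) Q"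
  shows "s \<le> \<beta> \<Longrightarrow> hier_ok L \<phi> \<beta> \<and> level_equiv (PiH L \<phi> \<beta>) Q \<and> level_equiv (SigH L \<phi> \<beta>) Q"
proof (induction \<beta> rule: less_induct)
  case (less \<beta>)
  show ?case
  proof (cases "\<beta> = s")
    case False
    with less.prems have "s < \<beta>" by simp
    from ordinal_cases[of \<beta>] show ?thesis
    proof cases
      case 1
      with \<open>s < \<beta>\<close> show ?thesis using is_zero_not_less by blast
    next
      case (2 \<eta>)
      have "hier_ok L \<phi> \<eta>" "level_equiv (PiH L \<phi> \<eta>) Q" "level_equiv (SigH L \<phi> \<eta>) Q"
        using less.IH[OF succ_of_less[OF 2] succ_of_le[OF 2 \<open>s < \<beta>\<close>]] by blast+
      moreover note level_equiv_PiStep[OF this(3)] level_equiv_SigStep[OF this(2)]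
      ultimately show ?thesis
        using Q hier_ok_succ[OF 2] hier_succ[OF 2, of L \<phi>] level_equiv_trans
        unfolding fixed_level_def by metis
    next
      case 3
      have below: "hier_ok L \<phi> \<delta> \<and> sublevel (PiH L \<phi> \<delta>) Q \<and> sublevel (SigH L \<phi> \<delta>) Q"
        if "\<delta> < \<beta>" for \<delta>
      proof (cases "s \<le> \<delta>")
        case True
        then show ?thesis using less.IH[OF that] unfolding level_equiv_def by blast
      next
        case False
        then have "hier_le L \<phi> \<delta> s" "hier_ok L \<phi> \<delta>" using hier_le[OF base(1)] hier_ok_le[OF base(1)] by simp_all
        then show ?thesis
          using base(2,3) sublevel_trans unfolding hier_le_def level_equiv_def by blast
      qed
      note lim = hier_limit[OF 3, of L \<phi>]
      have ok: "hier_ok L \<phi> \<beta>" using below lim unfolding hier_ok_def by auto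
      have "sublevel (PiH L \<phi> \<beta>) Q" "sublevel (SigH L \<phi> \<beta>) Q"
        using below lim level_limit_sublevel by blast+
      moreover have "sublevel Q (PiH L \<phi> \<beta>)" "sublevel Q (SigH L \<phi> \<beta>)"
        using hier_le[OF ok \<open>s < \<beta>\<close>] base(2,3) sublevel_trans
        unfolding hier_le_def level_equiv_def by blast+
      ultimately show ?thesis using ok unfolding level_equiv_def by blast
    qed
  qed (use base in simp)
qed

lemma collapsed_at_stable:
  assumes col: "collapsed_at L \<phi> \<alpha> Q" and "\<alpha> < \<beta>"
  shows "hier_ok L \<phi> \<beta> \<and> level_equiv (PiH L \<phi> \<beta>) Q \<and> level_equiv (SigH L \<phi> \<beta>) Q"
proof -
  obtain s where s: "succ_of \<alpha> s" "s \<le> \<beta>" using succ_of_exists[OF assms(2)] .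
  show ?thesis
    using hier_stable[OF collapsed_atD(5)[OF col] _ _ _ s(2)] collapsed_at_succ[OF col s(1)] by blast
qed

section \<open>Collapse at \<open>\<aleph>\<^sub>1\<close>\<close>

lemma hier_ok_limit:
  assumes lim: "limit_ord w" and ok: "ok_of (PiH L \<phi> w)"
  shows "hier_ok L \<phi> w"
proof -
  have "ok_of (SigH L \<phi> \<delta>)" if \<delta>: "\<delta> < w" for \<delta>
  proof -
    obtain s where s: "succ_of \<delta> s" "s < w" using limit_ord_succ_less[OF lim \<delta>] .
    then have "ok_of (PiH L \<phi> s)" using ok hier_limit(1)[OF lim] by blast
    then show ?thesis using hier_succ[OF s(1), of L \<phi>] by simp
  qed
  then show ?thesis using ok hier_limit(2)[OF lim] unfolding hier_ok_def by blast
qed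

lemma hier_aleph1_seq:
  fixes a :: "nat \<Rightarrow> 'v::lattice"
  assumes al: "is_aleph1 w" and ok: "hier_ok L \<phi> w" and a: "\<forall>n. a n \<in> dom_of (PiH L \<phi> w)"
  obtains j where "j < w"
    "\<forall>n. a n \<in> dom_of (PiH L \<phi> j) \<and> fun_of (PiH L \<phi> j) (a n) = fun_of (PiH L \<phi> w) (a n)"
    "\<forall>n. a n \<in> dom_of (SigH L \<phi> j) \<and> fun_of (SigH L \<phi> j) (a n) = fun_of (PiH L \<phi> w) (a n)"
proof -
  have "\<forall>n. \<exists>d. d < w \<and> a n \<in> dom_of (PiH L \<phi> d)"
    using a hier_limit(1)[OF is_aleph1_limit_ord[OF al], of L \<phi>] unfolding level_limit_def by auto
  then obtain \<delta> where \<delta>: "\<forall>n. \<delta> n < w \<and> a n \<in> dom_of (PiH L \<phi> (\<delta> n))" by metis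
  have "\<forall>n. \<delta> n < w" using \<delta> by blast
  with al obtain j where j: "j < w" "\<forall>n. \<delta> n < j" by (rule is_aleph1_bound)
  have ok_j: "hier_ok L \<phi> j" using hier_ok_le[OF ok less_imp_le[OF j(1)]] .
  have "sublevel (PiH L \<phi> (\<delta> n)) (PiH L \<phi> j)" "sublevel (PiH L \<phi> (\<delta> n)) (SigH L \<phi> j)"
    "sublevel (PiH L \<phi> (\<delta> n)) (PiH L \<phi> w)" for n
    using hier_le[OF ok_j, of "\<delta> n"] hier_le[OF ok, of "\<delta> n"] j(2) \<delta> unfolding hier_le_def by blast+
  with \<delta> have "\<forall>n. a n \<in> dom_of (PiH L \<phi> j) \<and> fun_of (PiH L \<phi> j) (a n) = fun_of (PiH L \<phi> w) (a n)"
    "\<forall>n. a n \<in> dom_of (SigH L \<phi> j) \<and> fun_of (SigH L \<phi> j) (a n) = fun_of (PiH L \<phi> w) (a n)"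
    unfolding sublevel_def by (metis subsetD)+
  with j(1) show thesis by (rule that)
qed

lemma hier_aleph1_Pi_closed:
  assumes al: "is_aleph1 w" and ok: "hier_ok L \<phi> w"
    and a: "conv_dec (dom_of (PiH L \<phi> w)) (fun_of (PiH L \<phi> w)) a" "inf_of a x"
    and e: "inf_of (\<lambda>n. fun_of (PiH L \<phi> w) (a n)) e"
  shows "x \<in> dom_of (PiH L \<phi> w) \<and> fun_of (PiH L \<phi> w) x = e"
proof -
  obtain j where j: "j < w"
    and seq: "\<forall>n. a n \<in> dom_of (SigH L \<phi> j) \<and> fun_of (SigH L \<phi> j) (a n) = fun_of (PiH L \<phi> w) (a n)"
    using hier_aleph1_seq[OF al ok] a(1) unfolding conv_dec_def by metis
  obtain s where s: "succ_of j s" "s < w" using limit_ord_succ_less[OF is_aleph1_limit_ord[OF al] j] .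
  have "Pi_extendible (dom_of (SigH L \<phi> j)) (fun_of (SigH L \<phi> j))"
    using hier_ok_succ[OF s(1)] hier_ok_le[OF ok less_imp_le[OF s(2)]] by blast
  moreover have "conv_dec (dom_of (SigH L \<phi> j)) (fun_of (SigH L \<phi> j)) a"
    "inf_of (\<lambda>n. fun_of (SigH L \<phi> j) (a n)) e"
    using conv_dec_transfer[OF a(1) seq] e seq by simp_all
  ultimately have "x \<in> dom_of (PiH L \<phi> s) \<and> fun_of (PiH L \<phi> s) x = e"
    using PiFun_inf_of[OF _ _ a(2)] hier_succ[OF s(1), of L \<phi>] by simp
  moreover have "sublevel (PiH L \<phi> s) (PiH L \<phi> w)" using hier_le[OF ok s(2)] unfolding hier_le_def by blast
  ultimately show ?thesis unfolding sublevel_def by auto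
qed

lemma hier_aleph1_Sig_closed:
  assumes al: "is_aleph1 w" and ok: "hier_ok L \<phi> w"
    and a: "conv_inc (dom_of (PiH L \<phi> w)) (fun_of (PiH L \<phi> w)) a" "sup_of a x"
    and e: "sup_of (\<lambda>n. fun_of (PiH L \<phi> w) (a n)) e"
  shows "x \<in> dom_of (PiH L \<phi> w) \<and> fun_of (PiH L \<phi> w) x = e"
proof -
  obtain j where j: "j < w"
    and seq: "\<forall>n. a n \<in> dom_of (PiH L \<phi> j) \<and> fun_of (PiH L \<phi> j) (a n) = fun_of (PiH L \<phi> w) (a n)"
    using hier_aleph1_seq[OF al ok] a(1) unfolding conv_inc_def by metis
  obtain s where s: "succ_of j s" "s < w" using limit_ord_succ_less[OF is_aleph1_limit_ord[OF al] j] .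
  have "Sig_extendible (dom_of (PiH L \<phi> j)) (fun_of (PiH L \<phi> j))"
    using hier_ok_succ[OF s(1)] hier_ok_le[OF ok less_imp_le[OF s(2)]] by blast
  moreover have "conv_inc (dom_of (PiH L \<phi> j)) (fun_of (PiH L \<phi> j)) a"
    "sup_of (\<lambda>n. fun_of (PiH L \<phi> j) (a n)) e"
    using conv_inc_transfer[OF a(1) seq] e seq by simp_all
  ultimately have "x \<in> dom_of (SigH L \<phi> s) \<and> fun_of (SigH L \<phi> s) x = e"
    using SigFun_sup_of[OF _ _ a(2)] hier_succ[OF s(1), of L \<phi>] by simp
  moreover have "sublevel (SigH L \<phi> s) (PiH L \<phi> w)" using hier_le[OF ok s(2)] unfolding hier_le_def by blast
  ultimately show ?thesis unfolding sublevel_def by auto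
qed

lemma hier_aleph1_collapsed:
  assumes al: "is_aleph1 w" and val: "valuation_on L \<phi>" and okw: "ok_of (PiH L \<phi> w)"
  shows "collapsed_at L \<phi> w (PiH L \<phi> w)"
proof -
  have lim: "limit_ord w" using is_aleph1_limit_ord[OF al] .
  have ok: "hier_ok L \<phi> w" using hier_ok_limit[OF lim okw] .
  let ?D = "dom_of (PiH L \<phi> w)" and ?f = "fun_of (PiH L \<phi> w)"
  have val_w: "valuation_on ?D ?f" using hier_valuation[OF val ok] by blast
  have Pi: "Pi_extendible ?D ?f \<and> PiDom ?D ?f = ?D \<and> (\<forall>x\<in>?D. PiFun ?D ?f x = ?f x)"
    using val_w hier_aleph1_Pi_closed[OF al ok] by (rule Pi_extendible_closed)
  have Sig: "Sig_extendible ?D ?f \<and> SigDom ?D ?f = ?D \<and> (\<forall>x\<in>?D. SigFun ?D ?f x = ?f x)"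
    using val_w hier_aleph1_Sig_closed[OF al ok] by (rule Sig_extendible_closed)
  have "Pi_extendible (dom_of (SigH L \<phi> w)) (fun_of (SigH L \<phi> w))"
    using level_equiv_PiStep(1)[OF hier_limit_equiv[OF lim ok]] Pi by blast
  with ok Pi Sig show ?thesis unfolding collapsed_at_def hier_ok_def by simp
qed

lemma collapsed_at_hier_ok:
  fixes \<alpha> \<beta> :: "'i::wellorder"
  assumes "collapsed_at L \<phi> \<alpha> Q"
  shows "hier_ok L \<phi> \<beta>"
proof (cases "\<alpha> < \<beta>")
  case True
  then show ?thesis using collapsed_at_stable[OF assms] by blast
next
  case False
  then show ?thesis using hier_ok_le[OF collapsed_atD(1)[OF assms]] by simp
qed

lemma collapsed_at_equiv_aleph1:
  fixes \<alpha> w :: "'i::wellorder"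
  assumes al: "is_aleph1 w" and val: "valuation_on L \<phi>" and col: "collapsed_at L \<phi> \<alpha> Q"
  shows "level_equiv Q (PiH L \<phi> w)"
proof -
  consider "\<alpha> < w" | "\<alpha> = w" | "w < \<alpha>" using neq_iff by blast
  then show ?thesis
  proof cases
    case 1
    then show ?thesis using collapsed_at_stable[OF col] level_equiv_sym by blast
  next
    case 2
    then have "hier_ok L \<phi> w" "Q = PiH L \<phi> w \<or> Q = SigH L \<phi> w"
      using collapsed_atD[OF col] by simp_all
    then show ?thesis
      using hier_limit_equiv[OF is_aleph1_limit_ord[OF al]] level_equiv_sym sublevel_refl
      unfolding level_equiv_def by blast
  next
    case 3
    have "collapsed_at L \<phi> w (PiH L \<phi> w)"
      using hier_aleph1_collapsed[OF al val] collapsed_at_hier_ok[OF col] unfolding hier_ok_def by blast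
    then show ?thesis using collapsed_at_stable[OF _ 3] collapsed_atD(4)[OF col] by blast
  qed
qed

(* The sublattice
   assumption is part of valuation_on L phi. *)

theorem corollary5p33:
  fixes L :: "'v::lattice set" and \<phi> :: "'v \<Rightarrow> 'e::ordered_ab_group_add" and w :: "'i::wellorder"
  assumes "sigma_distributive TYPE('v)"
    and "sublattice L"
    and "R_complete TYPE('e)"
    and "valuation_on L \<phi>"
    and "is_aleph1 w"
  shows "((\<exists>(\<alpha>::'i) Q. collapsed_at L \<phi> \<alpha> Q) \<longleftrightarrow> ok_of (PiH L \<phi> w)) \<and>
         ((\<exists>(\<alpha>::'i) Q. collapsed_at L \<phi> \<alpha> Q) \<longrightarrow>
            (\<forall>(\<alpha>::'i) Q. collapsed_at L \<phi> \<alpha> Q \<longrightarrow>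
               dom_of Q = dom_of (PiH L \<phi> w) \<and>
               (\<forall>x\<in>dom_of Q. fun_of Q x = fun_of (PiH L \<phi> w) x)))"
  using collapsed_at_hier_ok hier_aleph1_collapsed[OF assms(5,4)]
    collapsed_at_equiv_aleph1[OF assms(5,4)]
  unfolding level_equiv_iff hier_ok_def by blast

end
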